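(* For all integers $1\le m<n$ there exists a full-rank $A_1\in\mathbb R^{m\times n}$ such that for all $0<p,q<\infty$: $A_1^\dagger\in\mathrm{ginv}_{\mathrm{col}(p,q)}(A_1)$ if and only if $p=2$.
   Context: Generalized inverses are taken real: $\mathcal G(A)=\{X\in\mathbb R^{n\times m}:AX=I_m\}$, $\mathrm{ginv}_\nu(A)=\arg\min_{X\in\mathcal G(A)}\|X\|_\nu$ (a set). For $M$ with columns $m_j$, $\|M\|_{\mathrm{col}(p,q)}=(\sum_j\|m_j\|_p^q)^{1/q}$ (a quasi-norm when $p<1$ or $q<1$). $A^\dagger=A^\top(AA^\top)^{-1}$. *)

theory Defs
  imports "HOL-Analysis.Analysis"
begin

text \<open>Matrices: an m x n real matrix is real^'n^'m (rows indexed by 'm).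
  Entry (i,j) of X is X $ i $ j.\<close>

definition ginv_set :: "real^'n^'m \<Rightarrow> (real^'m^'n) set" where
  "ginv_set A = {X. A ** X = mat 1}"

definition ginv :: "((real^'m^'n) \<Rightarrow> real) \<Rightarrow> real^'n^'m \<Rightarrow> (real^'m^'n) set" where
  "ginv nu A = {X \<in> ginv_set A. \<forall>Y \<in> ginv_set A. nu X \<le> nu Y}"

definition col_norm :: "real \<Rightarrow> real \<Rightarrow> real^'c^'r \<Rightarrow> real" where
  "col_norm p q M = (\<Sum>j\<in>UNIV. ((\<Sum>i\<in>UNIV. \<bar>M $ i $ j\<bar> powr p) powr (1/p)) powr q) powr (1/q)"

definition pinv :: "real^'n^'m \<Rightarrow> real^'m^'n" where
  "pinv A = transpose A ** matrix_inv (A ** transpose A)"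

end

theory Submission imports Defs begin

text \<open>Take the matrix A whose rows are distinct unit vectors e_(f i), except that row r also
  carries a 2 in a column k hit by no other row. The right inverses of A with the transposed
  sparsity pattern form the line Q(a,b), a + 2b = 1, and A^+ = Q(1/5, 2/5). Only column r of
  Q(a,b) moves, and its p-norm is (a^p + b^p)^(1/p). Along a + 2b = 1 the derivative of
  a^p + b^p at (1/5, 2/5) is a nonzero multiple of 2^(p-1) - 2, so for p ~= 2 a nearby Q(a,b)
  has smaller column norm. For p = 2 every right inverse Y has y_(f r) + 2 y_k = 1 in column r
  and y_(f j) = 1 in every other column j, which by Cauchy-Schwarz bounds its column norms from
  below by those of A^+.\<close>

definition col_pnorm :: "real \<Rightarrow> real^'c^'r \<Rightarrow> 'c \<Rightarrow> real" where
  "col_pnorm p M j = (\<Sum>i\<in>UNIV. \<bar>M $ i $ j\<bar> powr p) powr (1/p)"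

lemma col_norm_eq_col_pnorm: "col_norm p q M = (\<Sum>j\<in>UNIV. col_pnorm p M j powr q) powr (1/q)"
  by (simp add: col_norm_def col_pnorm_def)

lemma col_pnorm_nonneg: "0 \<le> col_pnorm p M j"
  by (simp add: col_pnorm_def)

lemma col_norm_mono:
  assumes "\<And>j. col_pnorm p X j \<le> col_pnorm p Y j" "0 < q"
  shows "col_norm p q X \<le> col_norm p q Y"
  unfolding col_norm_eq_col_pnorm
  using assms by (intro powr_mono2 sum_mono sum_nonneg) (auto simp: col_pnorm_nonneg)

lemma col_norm_strict_mono:
  fixes X Y :: "real^'c::finite^'r::finite"
  assumes "\<And>j. j \<noteq> r \<Longrightarrow> col_pnorm p X j = col_pnorm p Y j"
    and "col_pnorm p X r < col_pnorm p Y r" "0 < q"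
  shows "col_norm p q X < col_norm p q Y"
proof -
  have split: "(\<Sum>j\<in>UNIV. col_pnorm p Z j powr q)
      = col_pnorm p Z r powr q + (\<Sum>j\<in>UNIV-{r}. col_pnorm p Z j powr q)" for Z :: "real^'c^'r"
    by (simp add: sum.remove)
  have rest: "(\<Sum>j\<in>UNIV-{r}. col_pnorm p X j powr q) = (\<Sum>j\<in>UNIV-{r}. col_pnorm p Y j powr q)"
    using assms(1) by (intro sum.cong) auto
  have "col_pnorm p X r powr q < col_pnorm p Y r powr q"
    using assms(2,3) by (intro powr_less_mono2) (auto simp: col_pnorm_nonneg)
  then have "(\<Sum>j\<in>UNIV. col_pnorm p X j powr q) < (\<Sum>j\<in>UNIV. col_pnorm p Y j powr q)"
    unfolding split rest by simp
  then show ?thesis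
    unfolding col_norm_eq_col_pnorm using assms(3)
    by (intro powr_less_mono2) (auto intro: sum_nonneg)
qed

lemma matrix_inv_eqI:
  fixes D :: "real^'n^'n"
  assumes "D ** E = mat 1" "E ** D = mat 1"
  shows "matrix_inv D = E"
proof -
  have inv: "D ** matrix_inv D = mat 1 \<and> matrix_inv D ** D = mat 1"
    unfolding matrix_inv_def by (rule someI[of _ E]) (use assms in blast)
  have "matrix_inv D = matrix_inv D ** (D ** E)"
    using assms(1) by simp
  also have "\<dots> = (matrix_inv D ** D) ** E"
    by (simp add: matrix_mul_assoc)
  also have "\<dots> = E"
    using inv by simp
  finally show ?thesis .
qed

lemma rank_eq_card_rows_if_right_inverse:
  fixes A :: "real^'n^'m"
  assumes "A ** X = mat 1"
  shows "rank A = CARD('m)"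
proof -
  have "CARD('m) \<le> rank A"
    using rank_mul_le_left[of A X] by (simp add: assms rank_I)
  then show ?thesis
    using rank_bound[of A] by simp
qed

lemma powr_line_sum_not_minimal:
  fixes p :: real
  assumes "0 < p" "p \<noteq> 2"
  shows "\<exists>a b. 0 < a \<and> 0 < b \<and> a + 2*b = 1 \<and> a powr p + b powr p < (1/5) powr p + (2/5) powr p"
proof (rule ccontr)
  assume no_better: "\<not> ?thesis"
  define g where "g t = (1/5 - 2*t) powr p + (2/5 + t) powr p" for t :: real
  have deriv: "DERIV g 0 :> p * (1/5) powr (p-1) * (-2) + p * (2/5) powr (p-1)"
    unfolding g_def
    by (intro derivative_eq_intros DERIV_chain2[where f="\<lambda>z. z powr p"] has_real_derivative_powr)
       auto
  have local_min: "g 0 \<le> g t" if "\<bar>0 - t\<bar> < 1/20" for t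
  proof -
    have "0 < 1/5 - 2*t" "0 < 2/5 + t" "(1/5 - 2*t) + 2*(2/5 + t) = 1"
      using that by auto
    then show ?thesis
      using no_better unfolding g_def by (metis add.right_neutral mult_zero_right diff_zero not_less)
  qed
  have "p * (1/5) powr (p-1) * (-2) + p * (2/5) powr (p-1) = 0"
    using DERIV_local_min[OF deriv, of "1/20"] local_min by simp
  moreover have "(2/5::real) powr (p-1) = 2 powr (p-1) * (1/5) powr (p-1)"
    using powr_mult[of 2 "1/5" "p-1"] by simp
  ultimately have "p * (1/5) powr (p-1) * (2 powr (p-1) - 2) = 0"
    by (simp add: algebra_simps)
  then have "(2::real) powr (p-1) = 2 powr 1"
    using assms(1) by simp
  then have "p - 1 = 1"
    using powr_inj[of 2 "p - 1" 1] by simp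
  then show False
    using assms(2) by simp
qed

lemma line_sum_squares_ge:
  fixes a b :: real
  assumes "a + 2*b = 1"
  shows "1/5 \<le> a^2 + b^2"
proof -
  have a: "a = 1 - 2*b"
    using assms by simp
  have "a^2 + b^2 = 1/5 + 5*(b - 2/5)^2"
    unfolding a by (simp add: power2_eq_square algebra_simps)
  then show ?thesis by simp
qed

definition bump_matrix :: "('m \<Rightarrow> 'n) \<Rightarrow> 'n \<Rightarrow> 'm \<Rightarrow> real^'n^'m" where
  "bump_matrix f k r = (\<chi> i j. (if j = f i then 1 else 0) + (if i = r \<and> j = k then 2 else 0))"

definition bump_rinv :: "('m \<Rightarrow> 'n) \<Rightarrow> 'n \<Rightarrow> 'm \<Rightarrow> real \<Rightarrow> real \<Rightarrow> real^'m^'n" where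
  "bump_rinv f k r a b = (\<chi> j i. if i = r then (if j = f r then a else if j = k then b else 0)
                                else (if j = f i then 1 else 0))"

definition diag_at :: "'m \<Rightarrow> real \<Rightarrow> real^'m^'m" where
  "diag_at r c = (\<chi> i i'. if i = i' then (if i = r then c else 1) else 0)"

lemma diag_at_mult: "diag_at r c ** diag_at r d = diag_at r (c * d)"
  by (auto simp: vec_eq_iff matrix_matrix_mult_def diag_at_def
      if_distrib[where f="\<lambda>x. x * _"] cong: if_cong)

lemma diag_at_1: "diag_at r 1 = mat 1"
  by (auto simp: vec_eq_iff diag_at_def mat_def)

lemma bump_matrix_mult_nth:
  fixes f :: "'m::finite \<Rightarrow> 'n::finite"
  shows "(bump_matrix f k r ** B) $ i $ i' = B $ f i $ i' + (if i = r then 2 * B $ k $ i' else 0)"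
  by (simp add: matrix_matrix_mult_def bump_matrix_def distrib_right sum.distrib
      if_distrib[where f="\<lambda>x. x * _"] cong: if_cong)

context
  fixes f :: "'m::finite \<Rightarrow> 'n::finite" and k :: 'n and r :: 'm
  assumes inj: "inj f" and k_notin: "k \<notin> range f"
begin

lemma f_neq_k [simp]: "f i \<noteq> k" "k \<noteq> f i"
  using k_notin by auto

lemma bump_matrix_mult_bump_rinv:
  assumes "a + 2*b = 1"
  shows "bump_matrix f k r ** bump_rinv f k r a b = mat 1"
  using assms by (auto simp: vec_eq_iff bump_matrix_mult_nth bump_rinv_def mat_def inj_eq[OF inj])

lemma bump_matrix_mult_transpose: "bump_matrix f k r ** transpose (bump_matrix f k r) = diag_at r 5"
  unfolding vec_eq_iff bump_matrix_mult_nth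
  by (auto simp: transpose_def bump_matrix_def diag_at_def inj_eq[OF inj])

lemma pinv_bump_matrix: "pinv (bump_matrix f k r) = bump_rinv f k r (1/5) (2/5)"
proof -
  have "matrix_inv (diag_at r 5) = diag_at r (1/5)"
    by (rule matrix_inv_eqI) (simp_all add: diag_at_mult diag_at_1)
  then show ?thesis
    unfolding pinv_def bump_matrix_mult_transpose
    by (auto simp: vec_eq_iff matrix_matrix_mult_def transpose_def bump_matrix_def diag_at_def
        bump_rinv_def if_distrib[where f="\<lambda>x. _ * x"] cong: if_cong)
qed

lemma col_pnorm_bump_rinv_other:
  assumes "j \<noteq> r"
  shows "col_pnorm p (bump_rinv f k r a b) j = 1"
proof -
  have "(\<Sum>i\<in>UNIV. \<bar>bump_rinv f k r a b $ i $ j\<bar> powr p) = (\<Sum>i\<in>UNIV. if i = f j then 1 else 0)"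
    using assms by (intro sum.cong) (auto simp: bump_rinv_def)
  then show ?thesis by (simp add: col_pnorm_def)
qed

lemma col_pnorm_bump_rinv_at:
  "col_pnorm p (bump_rinv f k r a b) r = (\<bar>a\<bar> powr p + \<bar>b\<bar> powr p) powr (1/p)"
proof -
  have "(\<Sum>i\<in>UNIV. \<bar>bump_rinv f k r a b $ i $ r\<bar> powr p)
      = (\<Sum>i\<in>UNIV. (if i = f r then \<bar>a\<bar> powr p else 0) + (if i = k then \<bar>b\<bar> powr p else 0))"
    by (intro sum.cong) (auto simp: bump_rinv_def)
  then show ?thesis by (simp add: sum.distrib col_pnorm_def)
qed

lemma col_pnorm_2_le_right_inverse:
  assumes "bump_matrix f k r ** Y = mat 1"
  shows "col_pnorm 2 (bump_rinv f k r (1/5) (2/5)) j \<le> col_pnorm 2 Y j"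
proof -
  let ?S = "\<Sum>i\<in>UNIV. \<bar>Y $ i $ j\<bar> powr 2"
  have diag: "Y $ f j $ j + (if j = r then 2 * Y $ k $ j else 0) = 1"
    using arg_cong[OF assms, of "\<lambda>M. M $ j $ j"] by (simp add: bump_matrix_mult_nth mat_def)
  show ?thesis
  proof (cases "j = r")
    case False
    have "\<bar>Y $ f j $ j\<bar> powr 2 \<le> ?S"
      by (rule member_le_sum) auto
    then have "1 powr (1/2) \<le> ?S powr (1/2)"
      using diag False by (intro powr_mono2) auto
    then show ?thesis
      using False by (simp add: col_pnorm_bump_rinv_other) (simp add: col_pnorm_def)
  next
    case True
    have "(\<Sum>i\<in>{f r, k}. \<bar>Y $ i $ j\<bar> powr 2) \<le> ?S"
      by (rule sum_mono2) auto
    moreover have "1/5 \<le> (Y $ f r $ j)^2 + (Y $ k $ j)^2"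
      using diag True by (intro line_sum_squares_ge) simp
    ultimately have "(1/5) powr (1/2) \<le> ?S powr (1/2)"
      using True by (intro powr_mono2) auto
    then show ?thesis
      using True by (simp add: col_pnorm_bump_rinv_at) (simp add: col_pnorm_def power2_eq_square)
  qed
qed

lemma pinv_bump_matrix_in_ginv_iff:
  assumes "0 < p" "0 < q"
  shows "pinv (bump_matrix f k r) \<in> ginv (col_norm p q) (bump_matrix f k r) \<longleftrightarrow> p = 2"
proof
  assume min: "pinv (bump_matrix f k r) \<in> ginv (col_norm p q) (bump_matrix f k r)"
  show "p = 2"
  proof (rule ccontr)
    assume "p \<noteq> 2"
    then obtain a b where ab: "0 < a" "0 < b" "a + 2*b = 1"
      "a powr p + b powr p < (1/5) powr p + (2/5) powr p"
      using powr_line_sum_not_minimal assms(1) by blast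
    have "bump_rinv f k r a b \<in> ginv_set (bump_matrix f k r)"
      using bump_matrix_mult_bump_rinv[OF ab(3)] by (simp add: ginv_set_def)
    then have "col_norm p q (bump_rinv f k r (1/5) (2/5)) \<le> col_norm p q (bump_rinv f k r a b)"
      using min by (auto simp: ginv_def pinv_bump_matrix)
    moreover have "col_norm p q (bump_rinv f k r a b) < col_norm p q (bump_rinv f k r (1/5) (2/5))"
    proof (rule col_norm_strict_mono[where r = r])
      have "(a powr p + b powr p) powr (1/p) < ((1/5) powr p + (2/5) powr p) powr (1/p)"
        using assms ab by (intro powr_less_mono2) auto
      then show "col_pnorm p (bump_rinv f k r a b) r < col_pnorm p (bump_rinv f k r (1/5) (2/5)) r"
        using ab by (simp add: col_pnorm_bump_rinv_at)
    qed (simp_all add: col_pnorm_bump_rinv_other assms)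
    ultimately show False by simp
  qed
next
  assume "p = 2"
  then show "pinv (bump_matrix f k r) \<in> ginv (col_norm p q) (bump_matrix f k r)"
    using assms(2) bump_matrix_mult_bump_rinv[of "1/5" "2/5"]
    by (auto simp: ginv_def ginv_set_def pinv_bump_matrix
        intro!: col_norm_mono col_pnorm_2_le_right_inverse)
qed

end

theorem theorem4:
  assumes "CARD('m::finite) < CARD('n::finite)"
  shows "\<exists>A :: real^'n^'m. rank A = CARD('m) \<and>
           (\<forall>p q :: real. 0 < p \<longrightarrow> 0 < q \<longrightarrow>
              (pinv A \<in> ginv (col_norm p q) A \<longleftrightarrow> p = 2))"
proof -
  obtain f :: "'m \<Rightarrow> 'n" where inj: "inj f"
    using card_le_inj[of "UNIV::'m set" "UNIV::'n set"] assms by auto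
  have "card (range f) < CARD('n)"
    using inj assms by (simp add: card_image)
  then obtain k where k: "k \<notin> range f"
    by (metis card_mono finite subsetI not_le)
  fix r :: 'm
  have "rank (bump_matrix f k r) = CARD('m)"
    using bump_matrix_mult_bump_rinv[OF inj k, of "1/5" "2/5"]
    by (intro rank_eq_card_rows_if_right_inverse) simp
  then show ?thesis
    using pinv_bump_matrix_in_ginv_iff[OF inj k] by blast
qed

end
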